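(* With probability one, $L_\alpha=\mathbb{T}$ for every real $\alpha\in(\widetilde h,\infty)$.
   Context: Let $\mathbb{T}=\mathbb{R}/\mathbb{Z}$ with canonical surjection $\phi:\mathbb{R}\to\mathbb{T}$ and quotient distance $d$. Let $\mathcal{U}=\{\varnothing\}\cup\bigcup_{j\ge1}\{0,1\}^j$ be the set of finite words over $\{0,1\}$; for $u=u_1\dots u_j$ write $|u|=j$ ($|\varnothing|=0$), and let $u\mathcal{U}^*$ denote the words $uw$ with $w$ nonempty. Put $x_u=\phi(\sum_{j=1}^{|u|}u_j2^{-j})$. For each $j\ge0$, $\nu_{0,j},\nu_{1,j}$ are probability measures on $\{0,1\}^2$, and $X=(X_u)_{u\in\mathcal{U}}$ is a $\{0,1\}$-valued process with: for all $u\in\mathcal{U}$, $A\subseteq\{0,1\}^2$, $\mathbb{P}((X_{u0},X_{u1})\in A\mid\mathcal{G}_u)=\nu_{X_u,|u|}(A)$, $\mathcal{G}_u=\sigma(X_v:v\in\mathcal{U}\setminus u\mathcal{U}^* )$. Fix $\underline{h}>0$. Let $\eta_j=1-\nu_{0,j}(\{(0,0)\})$ and $\widetilde h=\inf\{h>0:\sum_j2^{(1-\underline{h}/h)j}\eta_j=\infty\}$ ($\inf\emptyset=\infty$). Let $S=\{u\in\mathcal{U}:X_u=1\}$ and, for $\alpha>\underline{h}$, $L_\alpha=\{x\in\mathbb{T}:d(x,x_u)<2^{-\underline{h}|u|/\alpha}\text{ for infinitely many }u\in S\}$. *)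

theory Defs
  imports "HOL-Probability.Probability"
begin

text \<open>Finite binary words are represented as bool lists u = [u_1,...,u_j]
  (True = 1, False = 0); u0 is u @ [False], u1 is u @ [True].\<close>

text \<open>The dyadic point x_u, as a real representative in [0,1) of a point of T = R/Z.\<close>
definition xpt :: "bool list \<Rightarrow> real" where
  "xpt u = (\<Sum>i<length u. (if u ! i then 1 else 0) / 2 ^ (i + 1))"

definition tdist :: "real \<Rightarrow> real \<Rightarrow> real" where
  "tdist x y = (INF k::int. \<bar>x - y - of_int k\<bar>)"

definition descendants :: "bool list \<Rightarrow> bool list set" where
  "descendants u = {u @ w | w. w \<noteq> []}"

definition Gsig :: "'a measure \<Rightarrow> (bool list \<Rightarrow> 'a \<Rightarrow> bool) \<Rightarrow> bool list \<Rightarrow> 'a measure" where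
  "Gsig M X u = sigma (space M)
     (\<Union>v \<in> - descendants u. {X v -` A \<inter> space M | A. A \<subseteq> (UNIV :: bool set)})"

definition eta :: "(bool \<Rightarrow> nat \<Rightarrow> (bool \<times> bool) pmf) \<Rightarrow> nat \<Rightarrow> real" where
  "eta \<nu> j = 1 - pmf (\<nu> False j) (False, False)"

text \<open>htilde = inf {h > 0 : sum_j 2^((1 - hl/h) j) eta_j = infinity}, inf of the empty set = infinity.
  The series has nonnegative terms, so divergence to infinity means non-summability.\<close>
definition htilde :: "real \<Rightarrow> (bool \<Rightarrow> nat \<Rightarrow> (bool \<times> bool) pmf) \<Rightarrow> ereal" where
  "htilde hl \<nu> = Inf {ereal h | h. h > 0 \<and>
      \<not> summable (\<lambda>j. 2 powr ((1 - hl / h) * real j) * eta \<nu> j)}"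

text \<open>L_alpha (for a fixed outcome omega), as a set of real representatives of points of T.\<close>
definition Lset :: "real \<Rightarrow> (bool list \<Rightarrow> 'a \<Rightarrow> bool) \<Rightarrow> real \<Rightarrow> 'a \<Rightarrow> real set" where
  "Lset hl X \<alpha> \<omega> = {x. infinite {u. X u \<omega> \<and>
      tdist x (xpt u) < 2 powr (- (hl * real (length u) / \<alpha>))}}"

end

theory Submission
  imports Defs "HOL-Real_Asymp.Real_Asymp"
begin

(* Fix alpha > htilde.  Then alpha > hl, and for some h < alpha the series
   sum_j 2^((1 - hl/h) j) eta_j diverges, so its terms exceed 2^(-delta j) at infinitely many
   levels j.  At a level n, call a block of K_n ~ 2^n r_(n+1) consecutive dyadic words of
   length n barren if neither its words nor their children lie in S (r_j = 2^(-hl j/alpha) is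
   the target radius).  Conditioning successively on the sigma algebras G_u bounds the
   probability of a barren block by (1 - eta_n)^(K_n); a union bound over the 2^n starting
   positions gives 2^n (1 - eta_n)^(K_n), arbitrarily small along the good levels.  Hence
   almost surely infinitely many levels have no barren block, and at each of them every x is
   r-close to some x_u with u in S and |u| >= n, so L_alpha is the whole circle.  The null
   sets are collected over rational alpha, and L_alpha is monotone in alpha. *)

section \<open>Dyadic words\<close>

text \<open>The word of length n that spells the binary digits of m mod 2^n.\<close>
fun dyadic_word :: "nat \<Rightarrow> nat \<Rightarrow> bool list" where
  "dyadic_word 0 m = []"
| "dyadic_word (Suc n) m = dyadic_word n (m div 2) @ [odd m]"

lemma length_dyadic_word [simp]: "length (dyadic_word n m) = n"
  by (induction n arbitrary: m) auto

lemma xpt_append: "xpt (u @ [b]) = xpt u + (if b then 1 else 0) / 2 ^ (length u + 1)"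
  unfolding xpt_def by (simp add: nth_append)

lemma xpt_dyadic_word: "xpt (dyadic_word n m) = real (m mod 2^n) / 2^n"
proof (induction n arbitrary: m)
  case 0
  then show ?case by (simp add: xpt_def)
next
  case (Suc n)
  have digit: "(if odd m then 1 else 0 :: real) = real (m mod 2)"
    by (simp add: odd_iff_mod_2_eq_one even_iff_mod_2_eq_zero)
  have "m mod 2^(Suc n) = 2 * ((m div 2) mod 2^n) + m mod 2"
    by (simp add: mod_mult2_eq mult.commute)
  then have mod_split: "real (m mod 2^(Suc n)) = 2 * real ((m div 2) mod 2^n) + real (m mod 2)"
    by simp
  have "xpt (dyadic_word (Suc n) m) = real ((m div 2) mod 2^n) / 2^n + real (m mod 2) / 2^(Suc n)"
    using Suc[of "m div 2"] by (simp add: xpt_append digit)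
  also have "\<dots> = real (m mod 2^(Suc n)) / 2^(Suc n)"
    unfolding mod_split by (simp add: add_divide_distrib)
  finally show ?case .
qed

lemma dyadic_word_eq_imp_mod_eq:
  assumes "dyadic_word n a = dyadic_word n b"
  shows "a mod 2^n = b mod 2^n"
proof -
  have "real (a mod 2^n) / 2^n = real (b mod 2^n) / 2^n"
    using arg_cong[OF assms, of xpt] by (simp only: xpt_dyadic_word)
  then show ?thesis by simp
qed

lemma mod_add_inj:
  fixes m i j N :: nat
  assumes "(m + i) mod N = (m + j) mod N" "i < N" "j < N"
  shows "i = j"
proof -
  have no_collision: False if "a < b" "b < N" "(m + a) mod N = (m + b) mod N" for a b :: nat
  proof -
    have "N dvd b - a" using that(1,3) mod_eq_dvd_iff_nat[of "m + a" "m + b" N] by simp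
    moreover have "0 < b - a" "b - a < N" using that(1,2) by auto
    ultimately show False using nat_dvd_not_less by blast
  qed
  show ?thesis
    using no_collision[of i j] no_collision[of j i] assms by (cases i j rule: linorder_cases) auto
qed

definition dyadic_block :: "nat \<Rightarrow> nat \<Rightarrow> nat \<Rightarrow> bool list list" where
  "dyadic_block n m K = map (\<lambda>i. dyadic_word n (m + i)) [0..<K]"

lemma distinct_dyadic_block: "K \<le> 2^n \<Longrightarrow> distinct (dyadic_block n m K)"
  unfolding dyadic_block_def distinct_map
  by (auto simp: inj_on_def dest!: dyadic_word_eq_imp_mod_eq intro: mod_add_inj)

lemma length_in_dyadic_block: "v \<in> set (dyadic_block n m K) \<Longrightarrow> length v = n"
  unfolding dyadic_block_def by auto

definition dyadic_index :: "nat \<Rightarrow> real \<Rightarrow> nat" where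
  "dyadic_index n x = nat \<lfloor>(x - \<lfloor>x\<rfloor>) * 2^n\<rfloor>"

lemma dyadic_index_less: "dyadic_index n x < 2^n"
proof -
  have "(x - \<lfloor>x\<rfloor>) * 2^n < 1 * 2^n" by (intro mult_strict_right_mono) (linarith, simp)
  then have "\<lfloor>(x - \<lfloor>x\<rfloor>) * 2^n\<rfloor> < int (2^n)" by (simp add: floor_less_iff)
  then show ?thesis unfolding dyadic_index_def by (simp add: nat_less_iff)
qed

lemma dyadic_index_bounds:
  "real (dyadic_index n x) \<le> (x - \<lfloor>x\<rfloor>) * 2^n" "(x - \<lfloor>x\<rfloor>) * 2^n < real (dyadic_index n x) + 1"
proof -
  have "(x - \<lfloor>x\<rfloor>) * 2^n \<ge> 0" by simp
  then have "real (dyadic_index n x) = real_of_int \<lfloor>(x - \<lfloor>x\<rfloor>) * 2^n\<rfloor>"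
    unfolding dyadic_index_def by simp
  then show "real (dyadic_index n x) \<le> (x - \<lfloor>x\<rfloor>) * 2^n"
    "(x - \<lfloor>x\<rfloor>) * 2^n < real (dyadic_index n x) + 1" by linarith+
qed

lemma xpt_dyadic_word_eq: "xpt (dyadic_word n j) = real j / 2^n - real (j div 2^n)"
proof -
  define q where "q = j div 2^n"
  have "j = q * 2^n + j mod 2^n" unfolding q_def by (rule div_mult_mod_eq[symmetric])
  then have "real j = real (q * 2^n + j mod 2^n)" by (rule arg_cong)
  also have "\<dots> = real q * 2^n + real (j mod 2^n)" by simp
  finally have "real j / 2^n = real q + real (j mod 2^n) / 2^n"
    by (simp add: add_divide_distrib)
  then show ?thesis unfolding q_def by (simp add: xpt_dyadic_word)
qed

lemma tdist_le: "tdist x z \<le> \<bar>x - z - of_int k\<bar>"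
  unfolding tdist_def by (rule cINF_lower) (auto intro: bdd_belowI[where m=0])

text \<open>Every word of the block starting at the dyadic index of x, and each of its two
  children, has its dyadic point within (K+1)/2^n of x on the circle.\<close>
lemma dyadic_block_near:
  fixes x :: real
  assumes "i < K" and "e = 0 \<or> e = 1 / 2^(n+1)"
  shows "tdist x (xpt (dyadic_word n (dyadic_index n x + i)) + e) \<le> real (K + 1) / 2^n"
proof -
  define y where "y = x - \<lfloor>x\<rfloor>"
  define j where "j = dyadic_index n x + i"
  have "tdist x (xpt (dyadic_word n j) + e)
      \<le> \<bar>x - (xpt (dyadic_word n j) + e) - of_int (\<lfloor>x\<rfloor> + int (j div 2^n))\<bar>"
    by (rule tdist_le)
  also have "\<dots> = \<bar>y - real j / 2^n - e\<bar>"
    unfolding xpt_dyadic_word_eq y_def by simp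
  also have "\<dots> = \<bar>y * 2^n - real j - e * 2^n\<bar> / 2^n"
  proof -
    have "y - real j / 2^n - e = (y * 2^n - real j - e * 2^n) / 2^n"
      by (simp add: diff_divide_distrib)
    then show ?thesis by simp
  qed
  also have "\<dots> \<le> real (K + 1) / 2^n"
  proof (rule divide_right_mono)
    have "e * 2^n = 0 \<or> e * 2^n = 1/2" using assms(2) by auto
    moreover have "real i + 1 \<le> real K" using assms(1) by linarith
    moreover have "real j = real (dyadic_index n x) + real i" unfolding j_def by simp
    ultimately show "\<bar>y * 2^n - real j - e * 2^n\<bar> \<le> real (K + 1)"
      using dyadic_index_bounds[where n=n and x=x] unfolding y_def abs_le_iff by auto
  qed simp
  finally show ?thesis unfolding j_def .
qed

section \<open>Radii and block sizes\<close>

definition radius :: "real \<Rightarrow> real \<Rightarrow> nat \<Rightarrow> real" where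
  "radius hl \<alpha> j = 2 powr (- (hl * real j / \<alpha>))"

text \<open>The number of consecutive words of level n that fit into one target radius of level
  n+1, with a margin of two.\<close>
definition block_size :: "real \<Rightarrow> real \<Rightarrow> nat \<Rightarrow> nat" where
  "block_size hl \<alpha> n = nat \<lfloor>2^n * radius hl \<alpha> (n+1)\<rfloor> - 2"

lemma radius_antimono: "hl \<ge> 0 \<Longrightarrow> \<alpha> > 0 \<Longrightarrow> i \<le> j \<Longrightarrow> radius hl \<alpha> j \<le> radius hl \<alpha> i"
  unfolding radius_def by (intro powr_mono) (auto simp: divide_right_mono mult_left_mono)

lemma block_size_le: assumes "hl \<ge> 0" "\<alpha> > 0" shows "block_size hl \<alpha> n \<le> 2^n"
proof -
  have "radius hl \<alpha> (n+1) \<le> 1"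
    using radius_antimono[OF assms, of 0 "n+1"] by (simp add: radius_def)
  then have "2^n * radius hl \<alpha> (n+1) \<le> 2^n" by (intro mult_left_le) auto
  then have "\<lfloor>2^n * radius hl \<alpha> (n+1)\<rfloor> \<le> int (2^n)"
    using floor_mono[of "2^n * radius hl \<alpha> (n+1)" "2^n"] by simp
  then show ?thesis unfolding block_size_def by linarith
qed

lemma block_size_ge: "real (block_size hl \<alpha> n) \<ge> 2^n * radius hl \<alpha> (n+1) - 3"
  unfolding block_size_def by linarith

lemma block_size_radius:
  assumes "0 < block_size hl \<alpha> n"
  shows "real (block_size hl \<alpha> n + 1) / 2^n < radius hl \<alpha> (n+1)"
proof -
  have "nat \<lfloor>2^n * radius hl \<alpha> (n+1)\<rfloor> = block_size hl \<alpha> n + 2"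
    using assms unfolding block_size_def by linarith
  then have "int (block_size hl \<alpha> n + 2) = \<lfloor>2^n * radius hl \<alpha> (n+1)\<rfloor>" by linarith
  then have "real (block_size hl \<alpha> n + 2) \<le> 2^n * radius hl \<alpha> (n+1)"
    by (metis of_int_floor_le of_int_of_nat_eq)
  then show ?thesis by (simp add: divide_less_eq mult.commute)
qed

section \<open>Analysis of the critical exponent htilde\<close>

lemma eta_nonneg: "0 \<le> eta \<nu> j"
  unfolding eta_def by (simp add: pmf_le_1)

lemma eta_le_1: "eta \<nu> j \<le> 1"
  unfolding eta_def by simp

definition eta_series :: "real \<Rightarrow> (bool \<Rightarrow> nat \<Rightarrow> (bool \<times> bool) pmf) \<Rightarrow> real \<Rightarrow> nat \<Rightarrow> real" where
  "eta_series hl \<nu> h j = 2 powr ((1 - hl / h) * real j) * eta \<nu> j"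

lemma eta_series_nonneg: "0 \<le> eta_series hl \<nu> h j"
  unfolding eta_series_def by (simp add: eta_nonneg)

lemma summable_powr_geometric: "c < 0 \<Longrightarrow> summable (\<lambda>j::nat. 2 powr (c * real j))"
proof -
  assume "c < 0"
  have "2 powr (c * real j) = (2 powr c) ^ j" for j
    by (simp add: powr_powr[symmetric] powr_realpow)
  moreover have "2 powr c < 1" using \<open>c < 0\<close> by (simp add: powr_less_one)
  ultimately show ?thesis by (simp add: summable_geometric)
qed

text \<open>Below hl the series always converges, since eta is bounded by 1; so the divergent
  series witnessing htilde < alpha has an exponent h with hl \<le> h < alpha.\<close>
lemma htilde_witness:
  assumes "hl > 0" "htilde hl \<nu> < ereal \<alpha>"
  obtains h where "hl \<le> h" "h < \<alpha>" "\<not> summable (eta_series hl \<nu> h)"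
proof -
  obtain h where h: "h > 0" "h < \<alpha>" "\<not> summable (eta_series hl \<nu> h)"
    using assms(2) unfolding htilde_def Inf_less_iff eta_series_def by auto
  have "hl \<le> h"
  proof (rule ccontr)
    assume "\<not> hl \<le> h"
    then have "1 - hl / h < 0" using h(1) by (simp add: field_simps)
    then have "summable (\<lambda>j::nat. 2 powr ((1 - hl / h) * real j))" by (rule summable_powr_geometric)
    moreover have "norm (eta_series hl \<nu> h j) \<le> 2 powr ((1 - hl / h) * real j)" for j
      using eta_nonneg[of \<nu> j] eta_le_1[of \<nu> j] unfolding eta_series_def by (simp add: mult_left_le)
    ultimately have "summable (eta_series hl \<nu> h)" by (rule summable_comparison_test'[where N=0])
    then show False using h(3) by simp
  qed
  then show ?thesis using h that by blast
qed

lemma divergent_frequently_above_geometric: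
  fixes f :: "nat \<Rightarrow> real"
  assumes "\<And>n. 0 \<le> f n" "\<not> summable f" "\<delta> > 0"
  shows "\<exists>n\<ge>N. f n > 2 powr (- \<delta> * real n)"
proof (rule ccontr)
  assume "\<not> ?thesis"
  then have "\<forall>n\<ge>N. norm (f n) \<le> 2 powr (- \<delta> * real n)" using assms(1) by (auto simp: not_less)
  moreover have "summable (\<lambda>j::nat. 2 powr (- \<delta> * real j))"
    using assms(3) by (intro summable_powr_geometric) simp
  ultimately have "summable f"
    using summable_comparison_test'[of "\<lambda>j::nat. 2 powr (- \<delta> * real j)" N f] by blast
  then show False using assms(2) by simp
qed

lemma union_bound_at_large_term:
  assumes large: "eta_series hl \<nu> h n > 2 powr (- ((hl / h - hl / \<alpha>) / 2) * real n)"
  shows "2^n * (1 - eta \<nu> n) ^ block_size hl \<alpha> n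
      \<le> 2^n * exp (3 - 2 powr (- hl / \<alpha>) * 2 powr ((hl / h - hl / \<alpha>) / 2 * real n))"
proof -
  define d where "d = hl / h - hl / \<alpha>"
  define c where "c = 2 powr (- hl / \<alpha>)"
  define \<beta> where "\<beta> = 1 - hl / \<alpha>"
  let ?e = "eta \<nu> n" and ?K = "block_size hl \<alpha> n"
  have radius_eq: "2^n * radius hl \<alpha> (n+1) = c * 2 powr (\<beta> * real n)"
    unfolding radius_def c_def \<beta>_def
    by (simp add: powr_realpow[symmetric] powr_add[symmetric] field_simps add_divide_distrib)
  have "2 powr (\<beta> * real n) * ?e = eta_series hl \<nu> h n * 2 powr (d * real n)"
    unfolding eta_series_def \<beta>_def d_def by (simp add: powr_add[symmetric] field_simps)
  also have "\<dots> > 2 powr (- (d / 2) * real n) * 2 powr (d * real n)"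
    using large unfolding d_def by simp
  also have "2 powr (- (d / 2) * real n) * 2 powr (d * real n) = 2 powr (d / 2 * real n)"
    by (simp add: powr_add[symmetric] field_simps)
  finally have mass: "2 powr (\<beta> * real n) * ?e > 2 powr (d / 2 * real n)" .
  have "real ?K * ?e \<ge> (c * 2 powr (\<beta> * real n) - 3) * ?e"
    using block_size_ge[of n hl \<alpha>] radius_eq eta_nonneg[of \<nu> n] by (intro mult_right_mono) auto
  also have "(c * 2 powr (\<beta> * real n) - 3) * ?e \<ge> c * (2 powr (\<beta> * real n) * ?e) - 3"
    using eta_le_1[of \<nu> n] eta_nonneg[of \<nu> n] by (simp add: algebra_simps)
  moreover have "c * 2 powr (d / 2 * real n) \<le> c * (2 powr (\<beta> * real n) * ?e)"
    using mass by (intro mult_left_mono) (auto simp: c_def)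
  ultimately have KE: "real ?K * ?e \<ge> c * 2 powr (d / 2 * real n) - 3" by linarith
  have "(1 - ?e) ^ ?K \<le> exp (- ?e) ^ ?K"
    using eta_le_1[of \<nu> n] by (intro power_mono) (auto simp: exp_ge_add_one_self[of "- ?e", simplified])
  also have "\<dots> = exp (- (real ?K * ?e))" by (simp add: exp_of_nat_mult[symmetric])
  also have "\<dots> \<le> exp (3 - c * 2 powr (d / 2 * real n))" using KE by simp
  finally show ?thesis unfolding c_def d_def by simp
qed

lemma htilde_union_bound:
  assumes "hl > 0" "htilde hl \<nu> < ereal \<alpha>"
  shows "\<alpha> > hl" "\<epsilon> > 0 \<Longrightarrow> \<exists>n\<ge>N. 2^n * (1 - eta \<nu> n) ^ block_size hl \<alpha> n < \<epsilon>"
proof -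
  obtain h where h: "hl \<le> h" "h < \<alpha>" "\<not> summable (eta_series hl \<nu> h)"
    using htilde_witness[OF assms] .
  then show "\<alpha> > hl" by simp
  define \<delta> where "\<delta> = (hl / h - hl / \<alpha>) / 2"
  have "\<delta> > 0" unfolding \<delta>_def using h assms(1) by (simp add: frac_less2)
  define g where "g n = 2^n * exp (3 - 2 powr (- hl / \<alpha>) * 2 powr (\<delta> * real n))" for n :: nat
  have "g \<longlonglongrightarrow> 0" unfolding g_def using \<open>\<delta> > 0\<close> by real_asymp
  moreover assume "\<epsilon> > 0"
  ultimately obtain M where M: "\<forall>n\<ge>M. g n < \<epsilon>"
    by (metis (no_types, lifting) LIMSEQ_D abs_less_iff diff_zero real_norm_def)
  obtain n where n: "n \<ge> max N M" "eta_series hl \<nu> h n > 2 powr (- \<delta> * real n)"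
    using divergent_frequently_above_geometric[OF eta_series_nonneg h(3) \<open>\<delta> > 0\<close>] by blast
  have "2^n * (1 - eta \<nu> n) ^ block_size hl \<alpha> n \<le> g n"
    using union_bound_at_large_term n(2) unfolding g_def \<delta>_def by simp
  also have "g n < \<epsilon>" using M n(1) by simp
  finally show "\<exists>n\<ge>N. 2^n * (1 - eta \<nu> n) ^ block_size hl \<alpha> n < \<epsilon>" using n(1) by auto
qed

section \<open>The probabilistic block estimate\<close>

locale branching_tree = prob_space M for M :: "'a measure" +
  fixes X :: "bool list \<Rightarrow> 'a \<Rightarrow> bool" and \<nu> :: "bool \<Rightarrow> nat \<Rightarrow> (bool \<times> bool) pmf"
  assumes X_measurable: "\<And>u. X u \<in> measurable M (count_space UNIV)"
  and children_law: "\<And>u A. AE \<omega> in M.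
           real_cond_exp M (Gsig M X u)
             (indicator {\<omega>' \<in> space M. (X (u @ [False]) \<omega>', X (u @ [True]) \<omega>') \<in> A}) \<omega>
           = measure_pmf.prob (\<nu> (X u \<omega>) (length u)) A"
begin

definition past_generators :: "bool list \<Rightarrow> 'a set set" where
  "past_generators u =
     (\<Union>v \<in> - descendants u. {X v -` A \<inter> space M | A. A \<subseteq> (UNIV :: bool set)})"

lemma past_generators_Pow: "past_generators u \<subseteq> Pow (space M)"
  unfolding past_generators_def by auto

lemma space_Gsig [simp]: "space (Gsig M X u) = space M"
  unfolding Gsig_def past_generators_def[symmetric]
  using past_generators_Pow by simp

lemma sets_Gsig: "sets (Gsig M X u) = sigma_sets (space M) (past_generators u)"
  unfolding Gsig_def past_generators_def[symmetric]
  using past_generators_Pow by simp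

lemma subalgebra_Gsig: "subalgebra M (Gsig M X u)"
proof -
  have "past_generators u \<subseteq> sets M"
    unfolding past_generators_def using X_measurable by (auto intro: measurable_sets)
  then show ?thesis
    unfolding subalgebra_def sets_Gsig using sets.sigma_sets_subset by auto
qed

lemma X_measurable_Gsig: "v \<notin> descendants u \<Longrightarrow> X v \<in> measurable (Gsig M X u) (count_space UNIV)"
proof (rule measurableI)
  fix A :: "bool set" assume "v \<notin> descendants u"
  then have "X v -` A \<inter> space M \<in> past_generators u" unfolding past_generators_def by blast
  then show "X v -` A \<inter> space (Gsig M X u) \<in> sets (Gsig M X u)"
    unfolding sets_Gsig by auto
qed simp

definition barren :: "bool list list \<Rightarrow> 'a set" where
  "barren us = {\<omega> \<in> space M. \<forall>v\<in>set us. \<not> X v \<omega> \<and> \<not> X (v @ [False]) \<omega> \<and> \<not> X (v @ [True]) \<omega>}"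

lemma barren_sets_Gsig:
  assumes "\<forall>v\<in>set us. length v = length u \<and> v \<noteq> u"
  shows "barren us \<in> sets (Gsig M X u)"
proof -
  have nondesc: "v \<notin> descendants u" "v @ [b] \<notin> descendants u" if "v \<in> set us" for v b
    using assms that unfolding descendants_def by (auto simp: append_eq_append_conv2 Cons_eq_append_conv)
  have "{\<omega> \<in> space (Gsig M X u). \<not> X v \<omega> \<and> \<not> X (v @ [False]) \<omega> \<and> \<not> X (v @ [True]) \<omega>}
      \<in> sets (Gsig M X u)" if "v \<in> set us" for v
    using predE[OF X_measurable_Gsig[OF nondesc(1)[OF that]]]
      predE[OF X_measurable_Gsig[OF nondesc(2)[OF that]]]
    by (intro sets.sets_Collect_conj sets.sets_Collect_neg) auto
  then have "{\<omega> \<in> space (Gsig M X u).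
      \<forall>v\<in>set us. \<not> X v \<omega> \<and> \<not> X (v @ [False]) \<omega> \<and> \<not> X (v @ [True]) \<omega>} \<in> sets (Gsig M X u)"
    by (intro sets.sets_Collect_finite_All) auto
  then show ?thesis unfolding barren_def by simp
qed

lemma barren_sets: "barren us \<in> sets M"
  unfolding barren_def using predE[OF X_measurable]
  by (intro sets.sets_Collect_finite_All sets.sets_Collect_conj sets.sets_Collect_neg) auto

lemma children_absent_prob:
  assumes B: "B \<in> sets (Gsig M X u)" "\<And>\<omega>. \<omega> \<in> B \<Longrightarrow> \<not> X u \<omega>"
  shows "measure M (B \<inter> {\<omega> \<in> space M. \<not> X (u @ [False]) \<omega> \<and> \<not> X (u @ [True]) \<omega>})
        = measure M B * (1 - eta \<nu> (length u))"
proof -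
  interpret G: finite_measure_subalgebra M "Gsig M X u"
    by unfold_locales (rule subalgebra_Gsig)
  define D where "D = {\<omega>' \<in> space M. (X (u @ [False]) \<omega>', X (u @ [True]) \<omega>') \<in> {(False, False)}}"
  have D_eq: "D = {\<omega> \<in> space M. \<not> X (u @ [False]) \<omega> \<and> \<not> X (u @ [True]) \<omega>}"
    unfolding D_def by auto
  have D_sets: "D \<in> sets M"
    unfolding D_eq using predE[OF X_measurable]
    by (intro sets.sets_Collect_conj sets.sets_Collect_neg) auto
  have B_sets: "B \<in> sets M"
    using B(1) subalgebra_Gsig unfolding subalgebra_def by auto
  have D_integrable: "integrable M (indicator D :: 'a \<Rightarrow> real)"
    using D_sets by (intro integrable_real_indicator) (auto simp: emeasure_eq_measure)
  define p where "p = 1 - eta \<nu> (length u)"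
  have p: "measure_pmf.prob (\<nu> False (length u)) {(False, False)} = p"
    unfolding p_def eta_def by (simp add: measure_pmf_single)
  have "measure M (B \<inter> D) = (\<integral>\<omega>\<in>B. indicator D \<omega> \<partial>M)"
    unfolding set_lebesgue_integral_def using B_sets D_sets
    by (simp add: indicator_inter_arith[symmetric])
  also have "\<dots> = (\<integral>\<omega>\<in>B. real_cond_exp M (Gsig M X u) (indicator D) \<omega> \<partial>M)"
    by (rule G.real_cond_exp_intA[OF D_integrable B(1)])
  also have "\<dots> = (\<integral>\<omega>. indicator B \<omega> * p \<partial>M)"
    unfolding set_lebesgue_integral_def
  proof (rule integral_cong_AE)
    show "(\<lambda>\<omega>. indicator B \<omega> *\<^sub>R real_cond_exp M (Gsig M X u) (indicator D) \<omega>) \<in> borel_measurable M"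
      using B_sets by measurable
    show "(\<lambda>\<omega>. indicator B \<omega> * p) \<in> borel_measurable M"
      using B_sets by measurable
    show "AE \<omega> in M. indicator B \<omega> *\<^sub>R real_cond_exp M (Gsig M X u) (indicator D) \<omega>
        = indicator B \<omega> * p"
      using children_law[of u "{(False, False)}"] unfolding D_def[symmetric]
    proof eventually_elim
      case (elim \<omega>)
      then show ?case using B(2)[of \<omega>] p by (cases "\<omega> \<in> B") auto
    qed
  qed
  also have "\<dots> = measure M B * p" using B_sets by simp
  finally show ?thesis unfolding D_eq p_def .
qed

lemma barren_prob:
  "distinct us \<Longrightarrow> \<forall>v\<in>set us. length v = n \<Longrightarrow> measure M (barren us) \<le> (1 - eta \<nu> n) ^ length us"
proof (induction us)
  case Nil
  then show ?case by simp
next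
  case (Cons u us)
  have len_u: "length u = n" using Cons.prems by simp
  define B where "B = barren us \<inter> {\<omega> \<in> space M. \<not> X u \<omega>}"
  have barren_G: "barren us \<in> sets (Gsig M X u)"
    using Cons.prems by (intro barren_sets_Gsig) auto
  have "u \<notin> descendants u" by (simp add: descendants_def)
  then have absent_G: "{\<omega> \<in> space (Gsig M X u). \<not> X u \<omega>} \<in> sets (Gsig M X u)"
    using predE[OF X_measurable_Gsig] by (intro sets.sets_Collect_neg)
  have B_sets: "B \<in> sets (Gsig M X u)"
    using sets.Int[OF barren_G absent_G] unfolding B_def by simp
  have p_nonneg: "0 \<le> 1 - eta \<nu> n" using eta_le_1[of \<nu> n] by simp
  have "barren (u # us) = B \<inter> {\<omega> \<in> space M. \<not> X (u @ [False]) \<omega> \<and> \<not> X (u @ [True]) \<omega>}"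
    unfolding barren_def B_def by auto
  then have "measure M (barren (u # us)) = measure M B * (1 - eta \<nu> n)"
    using children_absent_prob[OF B_sets] len_u unfolding B_def by auto
  also have "\<dots> \<le> measure M (barren us) * (1 - eta \<nu> n)"
    unfolding B_def using barren_sets p_nonneg by (intro mult_right_mono finite_measure_mono) auto
  also have "\<dots> \<le> (1 - eta \<nu> n) ^ length us * (1 - eta \<nu> n)"
    using Cons p_nonneg by (intro mult_right_mono) auto
  finally show ?case by (simp add: mult.commute)
qed

definition gap_event :: "real \<Rightarrow> real \<Rightarrow> nat \<Rightarrow> 'a set" where
  "gap_event hl \<alpha> n = (\<Union>m<2^n. barren (dyadic_block n m (block_size hl \<alpha> n)))"

lemma gap_event_sets: "gap_event hl \<alpha> n \<in> sets M"
  unfolding gap_event_def using barren_sets by auto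

lemma gap_event_prob:
  assumes "block_size hl \<alpha> n \<le> 2^n"
  shows "measure M (gap_event hl \<alpha> n) \<le> 2^n * (1 - eta \<nu> n) ^ block_size hl \<alpha> n"
proof -
  have "measure M (gap_event hl \<alpha> n)
      \<le> (\<Sum>m<2^n. measure M (barren (dyadic_block n m (block_size hl \<alpha> n))))"
    unfolding gap_event_def using barren_sets by (intro finite_measure_subadditive_finite) auto
  also have "\<dots> \<le> (\<Sum>m<(2::nat)^n. (1 - eta \<nu> n) ^ block_size hl \<alpha> n)"
  proof (rule sum_mono)
    fix m
    have "measure M (barren (dyadic_block n m (block_size hl \<alpha> n)))
        \<le> (1 - eta \<nu> n) ^ length (dyadic_block n m (block_size hl \<alpha> n))"
      using assms by (intro barren_prob distinct_dyadic_block) (auto dest: length_in_dyadic_block)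
    then show "measure M (barren (dyadic_block n m (block_size hl \<alpha> n)))
        \<le> (1 - eta \<nu> n) ^ block_size hl \<alpha> n"
      by (simp add: dyadic_block_def)
  qed
  finally show ?thesis by simp
qed

text \<open>For alpha above htilde, almost surely the gap events fail at infinitely many levels:
  the event that they hold from level N on is contained in gap events of arbitrarily small
  probability.\<close>
lemma gap_events_infinitely_often_avoided:
  assumes "hl > 0" "htilde hl \<nu> < ereal \<alpha>"
  shows "AE \<omega> in M. \<forall>N. \<exists>n\<ge>N. \<omega> \<notin> gap_event hl \<alpha> n"
proof -
  have "\<alpha> > 0" using htilde_union_bound(1)[OF assms] assms(1) by linarith
  have "(\<Inter>n\<in>{N..}. gap_event hl \<alpha> n) \<in> null_sets M" for N
  proof -
    let ?T = "\<Inter>n\<in>{N..}. gap_event hl \<alpha> n"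
    have T_sets: "?T \<in> sets M" using gap_event_sets by (intro sets.countable_INT') auto
    have "measure M ?T \<le> 0 + \<epsilon>" if "\<epsilon> > 0" for \<epsilon>
    proof -
      obtain n where n: "n \<ge> N" "2^n * (1 - eta \<nu> n) ^ block_size hl \<alpha> n < \<epsilon>"
        using htilde_union_bound(2)[OF assms \<open>\<epsilon> > 0\<close>] by blast
      have "measure M ?T \<le> measure M (gap_event hl \<alpha> n)"
        using gap_event_sets n(1) by (intro finite_measure_mono) auto
      also have "\<dots> \<le> 2^n * (1 - eta \<nu> n) ^ block_size hl \<alpha> n"
        using assms(1) \<open>\<alpha> > 0\<close> by (intro gap_event_prob block_size_le) auto
      finally show ?thesis using n(2) by simp
    qed
    then have "measure M ?T \<le> 0" by (rule field_le_epsilon)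
    then have "measure M ?T = 0" using measure_nonneg[of M ?T] by linarith
    then show ?thesis using T_sets by (intro null_setsI) (simp add: emeasure_eq_measure)
  qed
  then have "AE \<omega> in M. \<exists>n\<ge>N. \<omega> \<notin> gap_event hl \<alpha> n" for N
    by (rule AE_I') auto
  then show ?thesis by (simp add: AE_all_countable)
qed

section \<open>Covering the circle\<close>

text \<open>Outside the gap event of level n, every x is within the target radius of some x_u with
  u in S and |u| \<ge> n: take the block starting at the dyadic index of x; one of its words or
  one of their children lies in S.\<close>
lemma near_point_outside_gap:
  assumes "hl \<ge> 0" "\<alpha> > 0" "\<omega> \<in> space M" "\<omega> \<notin> gap_event hl \<alpha> n"
  shows "\<exists>u. X u \<omega> \<and> length u \<ge> n \<and> tdist x (xpt u) < radius hl \<alpha> (length u)"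
proof -
  define K where "K = block_size hl \<alpha> n"
  define v where "v i = dyadic_word n (dyadic_index n x + i)" for i
  have "\<omega> \<notin> barren (dyadic_block n (dyadic_index n x) K)"
    using assms(4) dyadic_index_less[of n x] unfolding gap_event_def K_def by auto
  then obtain i where i: "i < K" and present: "X (v i) \<omega> \<or> X (v i @ [False]) \<omega> \<or> X (v i @ [True]) \<omega>"
    unfolding barren_def dyadic_block_def v_def using assms(3) by auto
  have close: "real (K + 1) / 2^n < radius hl \<alpha> (n+1)"
    using i unfolding K_def by (intro block_size_radius) simp
  have shrink: "radius hl \<alpha> (n+1) \<le> radius hl \<alpha> n"
    using assms(1,2) by (intro radius_antimono) auto
  have near0: "tdist x (xpt (v i)) \<le> real (K + 1) / 2^n"
    using dyadic_block_near[OF i, of 0] unfolding v_def by simp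
  have near1: "tdist x (xpt (v i) + 1 / 2^(n+1)) \<le> real (K + 1) / 2^n"
    using dyadic_block_near[OF i, of "1 / 2^(n+1)"] unfolding v_def by simp
  have len: "length (v i) = n" by (simp add: v_def)
  then have child_pts: "xpt (v i @ [False]) = xpt (v i)" "xpt (v i @ [True]) = xpt (v i) + 1 / 2^(n+1)"
    by (simp_all add: xpt_append)
  from present show ?thesis
  proof (elim disjE)
    assume "X (v i) \<omega>"
    then show ?thesis using near0 close shrink len by (intro exI[of _ "v i"]) auto
  next
    assume "X (v i @ [False]) \<omega>"
    then show ?thesis using near0 close len child_pts(1) by (intro exI[of _ "v i @ [False]"]) auto
  next
    assume "X (v i @ [True]) \<omega>"
    then show ?thesis using near1 close len child_pts(2) by (intro exI[of _ "v i @ [True]"]) auto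
  qed
qed

lemma Lset_UNIV_if_gaps_avoided:
  assumes "hl \<ge> 0" "\<alpha> > 0" "\<omega> \<in> space M" and avoided: "\<forall>N. \<exists>n\<ge>N. \<omega> \<notin> gap_event hl \<alpha> n"
  shows "Lset hl X \<alpha> \<omega> = UNIV"
proof -
  have "infinite {u. X u \<omega> \<and> tdist x (xpt u) < radius hl \<alpha> (length u)}" (is "infinite ?S") for x
  proof
    assume "finite ?S"
    then have "finite (length ` ?S)" by (rule finite_imageI)
    then obtain L where L: "\<forall>u\<in>?S. length u \<le> L"
      using finite_nat_set_iff_bounded_le by (metis imageI)
    obtain n where n: "n \<ge> Suc L" "\<omega> \<notin> gap_event hl \<alpha> n" using avoided by blast
    then obtain u where "u \<in> ?S" "length u \<ge> n"
      using near_point_outside_gap[OF assms(1-3) n(2), of x] by blast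
    then show False using L n(1) by fastforce
  qed
  then show ?thesis unfolding Lset_def radius_def by blast
qed

lemma AE_Lset_UNIV:
  assumes "hl > 0" "htilde hl \<nu> < ereal \<alpha>"
  shows "AE \<omega> in M. Lset hl X \<alpha> \<omega> = UNIV"
proof -
  have "\<alpha> > 0" using htilde_union_bound(1)[OF assms] assms(1) by linarith
  show ?thesis using gap_events_infinitely_often_avoided[OF assms]
  proof (rule AE_mp, intro AE_I2 impI)
    fix \<omega> assume "\<omega> \<in> space M" "\<forall>N. \<exists>n\<ge>N. \<omega> \<notin> gap_event hl \<alpha> n"
    then show "Lset hl X \<alpha> \<omega> = UNIV"
      using assms(1) \<open>\<alpha> > 0\<close> by (intro Lset_UNIV_if_gaps_avoided) auto
  qed
qed

end

text \<open>L_alpha grows with alpha, since the radii 2^(-hl |u|/alpha) do.\<close>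
lemma Lset_mono:
  assumes "hl \<ge> 0" "0 < a" "a \<le> b"
  shows "Lset hl X a \<omega> \<subseteq> Lset hl X b \<omega>"
proof -
  have "2 powr (- (hl * real (length u) / a)) \<le> 2 powr (- (hl * real (length u) / b))" for u :: "bool list"
    using assms by (intro powr_mono) (auto intro!: divide_left_mono mult_pos_pos)
  then have "{u. X u \<omega> \<and> tdist x (xpt u) < 2 powr (- (hl * real (length u) / a))}
      \<subseteq> {u. X u \<omega> \<and> tdist x (xpt u) < 2 powr (- (hl * real (length u) / b))}" for x
    by (auto intro: less_le_trans)
  then show ?thesis unfolding Lset_def by (auto dest: infinite_super)
qed

lemma ereal_rational_between:
  assumes "t < ereal \<alpha>"
  obtains q :: rat where "t < ereal (of_rat q)" "of_rat q < \<alpha>"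
proof -
  obtain z where z: "t < ereal z" "z < \<alpha>" using ereal_dense2[OF assms] by auto
  then obtain r where r: "r \<in> \<rat>" "z < r" "r < \<alpha>" using Rats_dense_in_real by blast
  then obtain q where q: "r = of_rat q" using Rats_cases by blast
  have "t < ereal r" using z(1) r(2) by (simp add: less_trans)
  then show ?thesis using that q r(3) by blast
qed

theorem mainTheorem6:
  fixes M :: "'a measure"
    and X :: "bool list \<Rightarrow> 'a \<Rightarrow> bool"
    and \<nu> :: "bool \<Rightarrow> nat \<Rightarrow> (bool \<times> bool) pmf"
    and hl :: real
  assumes "prob_space M"
    and "\<And>u. X u \<in> measurable M (count_space UNIV)"
    and "\<And>u A. AE \<omega> in M.
           real_cond_exp M (Gsig M X u)
             (indicator {\<omega>' \<in> space M. (X (u @ [False]) \<omega>', X (u @ [True]) \<omega>') \<in> A}) \<omega>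
           = measure_pmf.prob (\<nu> (X u \<omega>) (length u)) A"
    and "hl > 0"
  shows "AE \<omega> in M. \<forall>\<alpha>::real. htilde hl \<nu> < ereal \<alpha> \<longrightarrow> Lset hl X \<alpha> \<omega> = UNIV"
proof -
  interpret branching_tree M X \<nu>
    using assms(1-3) by (intro branching_tree.intro branching_tree_axioms.intro) auto
  have "AE \<omega> in M. htilde hl \<nu> < ereal (of_rat q) \<longrightarrow> Lset hl X (of_rat q) \<omega> = UNIV" for q :: rat
    using AE_Lset_UNIV[OF assms(4)] by (cases "htilde hl \<nu> < ereal (of_rat q)") auto
  then have "AE \<omega> in M. \<forall>q::rat. htilde hl \<nu> < ereal (of_rat q) \<longrightarrow> Lset hl X (of_rat q) \<omega> = UNIV"
    by (simp add: AE_all_countable)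
  then show ?thesis
  proof eventually_elim
    case (elim \<omega>)
    show ?case
    proof (intro allI impI)
      fix \<alpha> assume "htilde hl \<nu> < ereal \<alpha>"
      then obtain q :: rat where q: "htilde hl \<nu> < ereal (of_rat q)" "of_rat q < \<alpha>"
        by (rule ereal_rational_between)
      have "of_rat q > hl" using htilde_union_bound(1)[OF assms(4) q(1)] .
      then have "Lset hl X (of_rat q) \<omega> \<subseteq> Lset hl X \<alpha> \<omega>"
        using assms(4) q(2) by (intro Lset_mono) linarith+
      then show "Lset hl X \<alpha> \<omega> = UNIV" using elim q(1) by blast
    qed
  qed
qed

end
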